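(* Let $R$ be an integral domain, $M$ an $R$-module, and $\mathrm{Tor}(M)$ its $R$-torsion submodule. Then $\mathbb{P}(M)=\mathbb{P}(\mathrm{Tor}(M))\sqcup\mathbb{P}(M/\mathrm{Tor}(M))$, in the following sense: $\mathbb{P}(M)$ is the disjoint union of the set $\mathbb{T}(M)$ of classes represented by nonzero torsion elements and the set $\mathbb{F}(M)$ of classes represented by non-torsion elements; the inclusion $\mathrm{Tor}(M)\to M$ induces a bijection $\mathbb{P}(\mathrm{Tor}(M))\to\mathbb{T}(M)$; and $[a]\mapsto[\bar a]$, with $\bar a$ the image of $a$ in $M/\mathrm{Tor}(M)$, is a bijection $\mathbb{F}(M)\to\mathbb{P}(M/\mathrm{Tor}(M))$.
   Context: For an $R$-module $N$ let $N^\circ=N\setminus\{0\}$; define $x\sim'y$ on $N^\circ$ if there exist $m\in N$ and $r,s\in R$ with $x=rm$, $y=sm$; let $\sim$ be the equivalence relation generated by $\sim'$; and let $\mathbb{P}(N)=N^\circ/\sim$, with $[x]$ the class of $x$. An element is $R$-torsion if it is annihilated by some nonzero element of $R$. *)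

theory Defs
  imports Complex_Main
begin

text \<open>A module is given here abstractly by a carrier set N, a scalar action sc and a zero z,
so that the same construction applies to M, to the submodule Tor(M), and to the
quotient M/Tor(M) (whose elements are cosets).\<close>

definition pre_rel :: "'m set \<Rightarrow> ('r \<Rightarrow> 'm \<Rightarrow> 'm) \<Rightarrow> 'm \<Rightarrow> 'm \<Rightarrow> 'm \<Rightarrow> bool" where
  "pre_rel N sc z x y \<longleftrightarrow> x \<in> N - {z} \<and> y \<in> N - {z} \<and>
     (\<exists>m\<in>N. \<exists>r s. x = sc r m \<and> y = sc s m)"

definition proj_rel :: "'m set \<Rightarrow> ('r \<Rightarrow> 'm \<Rightarrow> 'm) \<Rightarrow> 'm \<Rightarrow> ('m \<times> 'm) set" where
  "proj_rel N sc z = {(x, y). x \<in> N - {z} \<and> y \<in> N - {z} \<and> equivclp (pre_rel N sc z) x y}"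

definition Proj :: "'m set \<Rightarrow> ('r \<Rightarrow> 'm \<Rightarrow> 'm) \<Rightarrow> 'm \<Rightarrow> 'm set set" where
  "Proj N sc z = (N - {z}) // proj_rel N sc z"

definition pcls :: "'m set \<Rightarrow> ('r \<Rightarrow> 'm \<Rightarrow> 'm) \<Rightarrow> 'm \<Rightarrow> 'm \<Rightarrow> 'm set" where
  "pcls N sc z x = proj_rel N sc z `` {x}"

definition torsion :: "('r::idom \<Rightarrow> 'm::ab_group_add \<Rightarrow> 'm) \<Rightarrow> 'm set" where
  "torsion sc = {x. \<exists>r. r \<noteq> 0 \<and> sc r x = 0}"

definition coset :: "'m::ab_group_add set \<Rightarrow> 'm \<Rightarrow> 'm set" where
  "coset T a = {y. y - a \<in> T}"

definition quot_carrier :: "'m::ab_group_add set \<Rightarrow> 'm set set" where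
  "quot_carrier T = range (coset T)"

definition quot_scale :: "('r \<Rightarrow> 'm::ab_group_add \<Rightarrow> 'm) \<Rightarrow> 'm set \<Rightarrow> 'r \<Rightarrow> 'm set \<Rightarrow> 'm set" where
  "quot_scale sc T r C = {y. \<exists>x\<in>C. y - sc r x \<in> T}"

end

theory Submission
  imports Defs
begin

text \<open>If \<open>r m \<noteq> 0\<close> is torsion then so is \<open>m\<close>, because \<open>R\<close> is a domain; hence a step
\<open>x \<sim>' y\<close> never connects a torsion element with a non-torsion one, and a step between torsion
elements already takes place inside \<open>Tor(M)\<close>. Steps between non-torsion elements descend to
\<open>M/Tor(M)\<close>. Conversely, if \<open>a \<equiv> r m\<close> and \<open>b \<equiv> s m\<close> modulo torsion, a nonzero scalar \<open>w\<close>
annihilating both differences gives \<open>w a = (w r) m\<close> and \<open>w b = (w s) m\<close>, so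
\<open>a \<sim>' w a \<sim>' w b \<sim>' b\<close>, since \<open>w a\<close> and \<open>w b\<close> stay nonzero.\<close>

lemma equivclp_invariant:
  assumes "equivclp R x y" and "\<And>a b. R a b \<Longrightarrow> P a \<longleftrightarrow> P b"
  shows "P x \<longleftrightarrow> P y"
  using assms(1) by (induction rule: equivclp_induct) (use assms(2) in blast)+

lemma equivclp_map_on:
  assumes "equivclp R x y" and "P x"
    and "\<And>a b. R a b \<Longrightarrow> P a \<longleftrightarrow> P b"
    and "\<And>a b. R a b \<Longrightarrow> P a \<Longrightarrow> P b \<Longrightarrow> equivclp R' (f a) (f b)"
  shows "equivclp R' (f x) (f y)"
proof -
  from assms(1) have "P y \<and> equivclp R' (f x) (f y)"
  proof (induction rule: equivclp_induct)
    case base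
    show ?case using assms(2) by simp
  next
    case (step y z)
    then have "P z" using assms(3) by blast
    moreover have "equivclp R' (f y) (f z)"
      using step assms(4) \<open>P z\<close> by (metis equivclp_sym)
    ultimately show ?case using step equivclp_trans by metis
  qed
  then show ?thesis by blast
qed

lemma equivclp_mono:
  assumes "equivclp R x y" and "\<And>a b. R a b \<Longrightarrow> R' a b"
  shows "equivclp R' x y"
  using assms(1)
proof (induction rule: equivclp_induct)
  case (step y z)
  then show ?case
    using assms(2) by (metis converse_r_into_equivclp equivclp_trans r_into_equivclp)
qed simp

lemma bij_betw_images_same_kernel:
  assumes "\<And>x y. x \<in> A \<Longrightarrow> y \<in> A \<Longrightarrow> F x = F y \<longleftrightarrow> G x = G y"
  shows "\<exists>g. bij_betw g (F ` A) (G ` A) \<and> (\<forall>x\<in>A. g (F x) = G x)"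
proof -
  define g where "g = G \<circ> inv_into A F"
  have g_F: "g (F x) = G x" if "x \<in> A" for x
    using assms[of "inv_into A F (F x)" x] that
    by (simp add: g_def inv_into_into f_inv_into_f)
  have "inj_on g (F ` A)"
    by (rule inj_onI) (auto simp: g_F assms)
  moreover have "g ` F ` A = G ` A"
    by (force simp: g_F image_image)
  ultimately show ?thesis
    using g_F by (auto simp: bij_betw_def)
qed

lemma equiv_proj_rel: "equiv (N - {z}) (proj_rel N sc z)"
  unfolding equiv_def refl_on_def sym_def trans_def proj_rel_def
  by (auto intro: equivclp_sym equivclp_trans)

lemma Proj_eq_pcls_image: "Proj N sc z = pcls N sc z ` (N - {z})"
  by (auto simp: Proj_def quotient_def pcls_def)

lemma pcls_eq_iff:
  assumes "x \<in> N - {z}" and "y \<in> N - {z}"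
  shows "pcls N sc z x = pcls N sc z y \<longleftrightarrow> equivclp (pre_rel N sc z) x y"
  using eq_equiv_class_iff[OF equiv_proj_rel assms] assms
  by (simp add: pcls_def proj_rel_def)

lemma pre_rel_mono: "N \<subseteq> N' \<Longrightarrow> pre_rel N sc z x y \<Longrightarrow> pre_rel N' sc z x y"
  unfolding pre_rel_def by blast

context module
begin

lemma coset_eq_iff:
  assumes "subspace T"
  shows "coset T a = coset T b \<longleftrightarrow> a - b \<in> T"
proof
  assume "coset T a = coset T b"
  then show "a - b \<in> T"
    using subspace_0[OF assms] by (auto simp: coset_def)
next
  assume "a - b \<in> T"
  then show "coset T a = coset T b"
    using subspace_diff[OF assms] subspace_add[OF assms] unfolding coset_def
    by (metis (no_types, lifting) diff_add_cancel diff_diff_eq2)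
qed

lemma coset_eq_self_iff: "subspace T \<Longrightarrow> coset T a = T \<longleftrightarrow> a \<in> T"
  using coset_eq_iff[of T a 0] by (simp add: coset_def)

lemma quot_carrier_minus_self:
  assumes "subspace T"
  shows "quot_carrier T - {T} = coset T ` (- T)"
  using coset_eq_self_iff[OF assms] unfolding quot_carrier_def by blast

lemma quot_scale_coset:
  assumes "subspace T"
  shows "quot_scale scale T r (coset T m) = coset T (r *s m)"
proof -
  have "y - r *s x \<in> T \<longleftrightarrow> y - r *s m \<in> T" if "x - m \<in> T" for x y
  proof -
    have "r *s (x - m) \<in> T" using subspace_scale[OF assms that] .
    then show ?thesis
      using subspace_add[OF assms] subspace_diff[OF assms]
      by (metis (no_types, lifting) scale_right_diff_distrib diff_add_cancel diff_diff_eq2)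
  qed
  moreover have "m - m \<in> T" using subspace_0[OF assms] by simp
  ultimately show ?thesis
    unfolding quot_scale_def coset_def by blast
qed

end

locale domain_module = module scale for scale :: "'a::idom \<Rightarrow> 'b::ab_group_add \<Rightarrow> 'b" (infixr \<open>*s\<close> 75)
begin

abbreviation "tor \<equiv> torsion scale"
abbreviation "quot_M \<equiv> quot_carrier tor"
abbreviation "quot_sc \<equiv> quot_scale scale tor"

lemma subspace_torsion: "subspace tor"
proof (rule subspaceI)
  show "0 \<in> tor"
    unfolding torsion_def by (auto intro!: exI[of _ 1])
next
  fix x y assume "x \<in> tor" "y \<in> tor"
  then obtain t u where "t \<noteq> 0" "t *s x = 0" "u \<noteq> 0" "u *s y = 0"
    by (auto simp: torsion_def)
  then have "(u * t) *s (x + y) = 0"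
    by (metis scale_right_distrib scale_scale mult.commute add_0 scale_zero_right)
  then show "x + y \<in> tor"
    using \<open>t \<noteq> 0\<close> \<open>u \<noteq> 0\<close> by (auto simp: torsion_def intro!: exI[of _ "u * t"])
next
  fix c x assume "x \<in> tor"
  then obtain t where "t \<noteq> 0" "t *s x = 0" by (auto simp: torsion_def)
  then have "t *s (c *s x) = 0" by (metis scale_left_commute scale_zero_right)
  then show "c *s x \<in> tor"
    using \<open>t \<noteq> 0\<close> by (auto simp: torsion_def)
qed

lemma torsion_if_scale_torsion:
  assumes "r *s m \<in> tor" and "r *s m \<noteq> 0"
  shows "m \<in> tor"
proof -
  obtain t where "t \<noteq> 0" "(t * r) *s m = 0"
    using assms(1) by (auto simp: torsion_def)
  moreover have "r \<noteq> 0" using assms(2) by auto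
  ultimately show ?thesis by (auto simp: torsion_def intro!: exI[of _ "t * r"])
qed

lemma pre_rel_generator_torsion:
  assumes "pre_rel UNIV scale 0 x y" and "x \<in> tor"
  obtains m r s where "m \<in> tor" "x = r *s m" "y = s *s m"
  using assms torsion_if_scale_torsion unfolding pre_rel_def by blast

lemma pre_rel_torsion_iff:
  assumes "pre_rel UNIV scale 0 x y"
  shows "x \<in> tor \<longleftrightarrow> y \<in> tor"
proof -
  have "y \<in> tor" if "pre_rel UNIV scale 0 x y" "x \<in> tor" for x y
    using pre_rel_generator_torsion[OF that] subspace_scale[OF subspace_torsion] by metis
  moreover have "pre_rel UNIV scale 0 y x"
    using assms unfolding pre_rel_def by blast
  ultimately show ?thesis using assms by blast
qed

lemma equivclp_torsion_iff:
  "equivclp (pre_rel UNIV scale 0) x y \<Longrightarrow> x \<in> tor \<longleftrightarrow> y \<in> tor"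
  by (erule equivclp_invariant) (rule pre_rel_torsion_iff)

lemma pre_rel_in_torsion:
  assumes "pre_rel UNIV scale 0 x y" and "x \<in> tor"
  shows "pre_rel tor scale 0 x y"
proof -
  obtain m r s where "m \<in> tor" "x = r *s m" "y = s *s m"
    using pre_rel_generator_torsion[OF assms] .
  moreover have "y \<in> tor" using assms pre_rel_torsion_iff by blast
  ultimately show ?thesis using assms unfolding pre_rel_def by blast
qed

lemma equivclp_pre_rel_torsion_iff:
  assumes "x \<in> tor"
  shows "equivclp (pre_rel tor scale 0) x y \<longleftrightarrow> equivclp (pre_rel UNIV scale 0) x y"
proof
  assume "equivclp (pre_rel tor scale 0) x y"
  then show "equivclp (pre_rel UNIV scale 0) x y"
    by (rule equivclp_mono) (auto intro: pre_rel_mono[of "tor" UNIV])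
next
  assume "equivclp (pre_rel UNIV scale 0) x y"
  then have "equivclp (pre_rel tor scale 0) (id x) (id y)"
    by (rule equivclp_map_on[where P = "\<lambda>x. x \<in> tor"])
      (use assms pre_rel_torsion_iff in \<open>auto intro: r_into_equivclp pre_rel_in_torsion\<close>)
  then show "equivclp (pre_rel tor scale 0) x y" by simp
qed

lemma equivclp_if_congruent_multiples:
  assumes "x - r *s m \<in> tor" and "y - s *s m \<in> tor" and "x \<notin> tor" and "y \<notin> tor"
  shows "equivclp (pre_rel UNIV scale 0) x y"
proof -
  obtain t where t: "t \<noteq> 0" "t *s (x - r *s m) = 0" using assms(1) by (auto simp: torsion_def)
  obtain u where u: "u \<noteq> 0" "u *s (y - s *s m) = 0" using assms(2) by (auto simp: torsion_def)
  define w where "w = t * u"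
  have "w \<noteq> 0" using t u by (simp add: w_def)
  have wx: "w *s x = (w * r) *s m"
    using t(2) by (simp add: w_def scale_right_diff_distrib mult.commute[of t u] flip: scale_scale)
  have wy: "w *s y = (w * s) *s m"
    using u(2) by (simp add: w_def scale_right_diff_distrib flip: scale_scale)
  have nonzero: "x \<noteq> 0" "y \<noteq> 0" "w *s x \<noteq> 0" "w *s y \<noteq> 0"
    using \<open>w \<noteq> 0\<close> assms(3,4) subspace_0[OF subspace_torsion] unfolding torsion_def by auto
  have "pre_rel UNIV scale 0 x (w *s x)" "pre_rel UNIV scale 0 y (w *s y)"
    unfolding pre_rel_def using nonzero by (metis DiffI UNIV_I singletonD scale_one)+
  moreover have "pre_rel UNIV scale 0 (w *s x) (w *s y)"
    unfolding pre_rel_def using nonzero wx wy by auto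
  ultimately show ?thesis
    by (meson converse_r_into_equivclp equivclp_trans r_into_equivclp)
qed

lemma pre_rel_cosets:
  assumes "pre_rel UNIV scale 0 x y" and "x \<notin> tor" and "y \<notin> tor"
  shows "pre_rel quot_M quot_sc tor (coset tor x) (coset tor y)"
proof -
  obtain m r s where "x = r *s m" "y = s *s m"
    using assms(1) unfolding pre_rel_def by blast
  then have "coset tor x = quot_sc r (coset tor m)" "coset tor y = quot_sc s (coset tor m)"
    by (simp_all add: quot_scale_coset[OF subspace_torsion])
  moreover have "coset tor x \<in> quot_M - {tor}" "coset tor y \<in> quot_M - {tor}"
    using assms(2,3) by (simp_all add: quot_carrier_minus_self[OF subspace_torsion])
  moreover have "coset tor m \<in> quot_M"
    by (simp add: quot_carrier_def)
  ultimately show ?thesis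
    unfolding pre_rel_def by blast
qed

lemma equivclp_if_pre_rel_cosets:
  assumes "pre_rel quot_M quot_sc tor (coset tor x) (coset tor y)"
  shows "equivclp (pre_rel UNIV scale 0) x y"
proof -
  obtain m r s where "coset tor x = coset tor (r *s m)" "coset tor y = coset tor (s *s m)"
    using assms unfolding pre_rel_def quot_carrier_def
    by (auto simp: quot_scale_coset[OF subspace_torsion])
  moreover have "x \<notin> tor" "y \<notin> tor"
    using assms by (auto simp: pre_rel_def coset_eq_self_iff[OF subspace_torsion])
  ultimately show ?thesis
    by (auto simp: coset_eq_iff[OF subspace_torsion] intro: equivclp_if_congruent_multiples)
qed

lemma equivclp_quotient_iff:
  assumes "x \<notin> tor" and "y \<notin> tor"
  shows "equivclp (pre_rel quot_M quot_sc tor) (coset tor x) (coset tor y)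
    \<longleftrightarrow> equivclp (pre_rel UNIV scale 0) x y"
    (is "equivclp ?Q _ _ \<longleftrightarrow> equivclp ?P x y")
proof
  have "equivclp ?P x y'" if "equivclp ?Q (coset tor x) D" "D = coset tor y'" for D y'
    using that
  proof (induction arbitrary: y' rule: equivclp_induct)
    case base
    have "x - 1 *s x \<in> tor"
      using subspace_0[OF subspace_torsion] by simp
    moreover have "y' - 1 *s x \<in> tor"
      using base coset_eq_iff[OF subspace_torsion, of y' x] by simp
    moreover have "y' \<notin> tor"
      using base assms(1) coset_eq_self_iff[OF subspace_torsion] by metis
    ultimately show ?case
      using assms(1) by (blast intro: equivclp_if_congruent_multiples)
  next
    case (step D' D)
    obtain y'' where "D' = coset tor y''"
      using step.hyps(2) unfolding pre_rel_def quot_carrier_def by blast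
    then have "equivclp ?P x y''" "?Q (coset tor y'') (coset tor y')
      \<or> ?Q (coset tor y') (coset tor y'')"
      using step by auto
    then show ?case
      by (metis equivclp_if_pre_rel_cosets equivclp_sym equivclp_trans)
  qed
  then show "equivclp ?Q (coset tor x) (coset tor y) \<Longrightarrow> equivclp ?P x y"
    by blast
next
  assume "equivclp ?P x y"
  then show "equivclp ?Q (coset tor x) (coset tor y)"
    by (rule equivclp_map_on[where P = "\<lambda>x. x \<notin> tor"])
      (use assms pre_rel_torsion_iff in \<open>auto intro: r_into_equivclp pre_rel_cosets\<close>)
qed

lemma disjoint_pcls_torsion:
  "pcls UNIV scale 0 ` (tor - {0}) \<inter> pcls UNIV scale 0 ` (- tor) = {}"
proof -
  have "pcls UNIV scale 0 x \<noteq> pcls UNIV scale 0 y"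
    if "x \<in> tor - {0}" "y \<notin> tor" for x y
    using that equivclp_torsion_iff[of x y] pcls_eq_iff[of x UNIV 0 y scale]
      subspace_0[OF subspace_torsion] by auto
  then show ?thesis by blast
qed

lemma bij_Proj_torsion:
  "\<exists>f. bij_betw f (Proj tor scale 0) (pcls UNIV scale 0 ` (tor - {0}))
    \<and> (\<forall>x \<in> tor - {0}. f (pcls tor scale 0 x) = pcls UNIV scale 0 x)"
  unfolding Proj_eq_pcls_image
  by (rule bij_betw_images_same_kernel) (simp add: pcls_eq_iff equivclp_pre_rel_torsion_iff)

lemma bij_Proj_quotient:
  "\<exists>g. bij_betw g (pcls UNIV scale 0 ` (- tor)) (Proj quot_M quot_sc tor)
    \<and> (\<forall>x \<in> - tor. g (pcls UNIV scale 0 x) = pcls quot_M quot_sc tor (coset tor x))"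
proof -
  have "pcls UNIV scale 0 x = pcls UNIV scale 0 y
    \<longleftrightarrow> pcls quot_M quot_sc tor (coset tor x) = pcls quot_M quot_sc tor (coset tor y)"
    if "x \<notin> tor" "y \<notin> tor" for x y
  proof -
    have "x \<in> UNIV - {0}" "y \<in> UNIV - {0}"
      using that subspace_0[OF subspace_torsion] by auto
    moreover have "coset tor x \<in> quot_M - {tor}" "coset tor y \<in> quot_M - {tor}"
      using that by (simp_all add: quot_carrier_minus_self[OF subspace_torsion])
    ultimately show ?thesis
      using equivclp_quotient_iff[OF that] by (simp add: pcls_eq_iff)
  qed
  then show ?thesis
    unfolding Proj_eq_pcls_image quot_carrier_minus_self[OF subspace_torsion] image_image
    by (intro bij_betw_images_same_kernel) simp
qed

end

theorem theorem4p17: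
  fixes sc :: "'r::idom \<Rightarrow> 'm::ab_group_add \<Rightarrow> 'm"
  assumes "module sc"
  defines "T \<equiv> torsion sc"
  defines "TT \<equiv> {pcls UNIV sc 0 x | x. x \<in> T \<and> x \<noteq> 0}"
  defines "FF \<equiv> {pcls UNIV sc 0 x | x. x \<notin> T}"
  shows "Proj UNIV sc 0 = TT \<union> FF \<and> TT \<inter> FF = {}
    \<and> (\<exists>f. bij_betw f (Proj T sc 0) TT \<and> (\<forall>x \<in> T - {0}. f (pcls T sc 0 x) = pcls UNIV sc 0 x))
    \<and> (\<exists>g. bij_betw g FF (Proj (quot_carrier T) (quot_scale sc T) T)
           \<and> (\<forall>a. a \<notin> T \<longrightarrow>
                g (pcls UNIV sc 0 a) = pcls (quot_carrier T) (quot_scale sc T) T (coset T a)))"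
proof -
  interpret domain_module sc
    by (simp add: domain_module_def assms(1))
  have TT: "TT = pcls UNIV sc 0 ` (T - {0})" and FF: "FF = pcls UNIV sc 0 ` (- T)"
    unfolding TT_def FF_def by auto
  have "0 \<in> T"
    unfolding T_def by (rule subspace_0[OF subspace_torsion])
  then have "Proj UNIV sc 0 = TT \<union> FF"
    unfolding Proj_eq_pcls_image TT FF by auto
  moreover have "TT \<inter> FF = {}"
    unfolding TT FF T_def by (rule disjoint_pcls_torsion)
  ultimately show ?thesis
    using bij_Proj_torsion bij_Proj_quotient unfolding TT FF T_def by auto
qed

end
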